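(* Let $G$ be a chemical nontrivial cactus on $n$ vertices with $k$ cycles. Then \[R(G)\geq \frac{n}{2}-(k-1)\left(\frac{3}{2}-\sqrt 2\right),\] with equality when no two articulation points of $G$ are adjacent.
   Context: A graph is chemical if every vertex has degree at most $4$. A cactus is a connected graph in which any two cycles share at most one vertex; it is nontrivial if it has no bridges (edges whose removal disconnects the graph). An articulation point is a vertex whose removal disconnects the graph. The Randi\'c index is $R(G)=\sum_{uv\in E(G)}\frac{1}{\sqrt{d_ud_v}}$, where $d_v$ is the degree of $v$. *)

theory Defs
  imports Complex_Main
begin

definition simple_graph :: "'a set \<Rightarrow> 'a set set \<Rightarrow> bool" where
  "simple_graph V E \<longleftrightarrow> finite V \<and> (\<forall>e\<in>E. e \<subseteq> V \<and> card e = 2)"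

definition adj :: "'a set set \<Rightarrow> 'a \<Rightarrow> 'a \<Rightarrow> bool" where
  "adj E u v \<longleftrightarrow> u \<noteq> v \<and> {u, v} \<in> E"

definition degree :: "'a set set \<Rightarrow> 'a \<Rightarrow> nat" where
  "degree E v = card {e\<in>E. v \<in> e}"

definition reachable :: "'a set \<Rightarrow> 'a set set \<Rightarrow> 'a \<Rightarrow> 'a \<Rightarrow> bool" where
  "reachable V E = (\<lambda>x y. x \<in> V \<and> y \<in> V \<and> adj E x y)\<^sup>*\<^sup>*"

definition connected_graph :: "'a set \<Rightarrow> 'a set set \<Rightarrow> bool" where
  "connected_graph V E \<longleftrightarrow> V \<noteq> {} \<and> (\<forall>u\<in>V. \<forall>v\<in>V. reachable V E u v)"

definition is_cycle :: "'a set set \<Rightarrow> bool" where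
  "is_cycle C \<longleftrightarrow> C \<noteq> {} \<and> finite C \<and> (\<forall>e\<in>C. card e = 2)
      \<and> connected_graph (\<Union>C) C \<and> (\<forall>v\<in>\<Union>C. degree C v = 2)"

definition cycles :: "'a set set \<Rightarrow> 'a set set set" where
  "cycles E = {C. C \<subseteq> E \<and> is_cycle C}"

definition cactus :: "'a set \<Rightarrow> 'a set set \<Rightarrow> bool" where
  "cactus V E \<longleftrightarrow> connected_graph V E \<and>
     (\<forall>C1\<in>cycles E. \<forall>C2\<in>cycles E. C1 \<noteq> C2 \<longrightarrow> card (\<Union>C1 \<inter> \<Union>C2) \<le> 1)"

definition is_bridge :: "'a set \<Rightarrow> 'a set set \<Rightarrow> 'a set \<Rightarrow> bool" where
  "is_bridge V E e \<longleftrightarrow> e \<in> E \<and> \<not> connected_graph V (E - {e})"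

definition nontrivial_cactus :: "'a set \<Rightarrow> 'a set set \<Rightarrow> bool" where
  "nontrivial_cactus V E \<longleftrightarrow> cactus V E \<and> (\<forall>e\<in>E. \<not> is_bridge V E e)"

definition articulation_point :: "'a set \<Rightarrow> 'a set set \<Rightarrow> 'a \<Rightarrow> bool" where
  "articulation_point V E v \<longleftrightarrow> v \<in> V \<and>
     (\<exists>x\<in>V - {v}. \<exists>y\<in>V - {v}. \<not> reachable (V - {v}) {e\<in>E. v \<notin> e} x y)"

definition chemical :: "'a set \<Rightarrow> 'a set set \<Rightarrow> bool" where
  "chemical V E \<longleftrightarrow> (\<forall>v\<in>V. degree E v \<le> 4)"

definition randic :: "'a set set \<Rightarrow> real" where
  "randic E = (\<Sum>e\<in>E. 1 / sqrt (\<Prod>v\<in>e. real (degree E v)))"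

end

theory Submission
  imports Defs
begin

text \<open>In a bridgeless cactus every edge lies on exactly one cycle, so a vertex on \<open>c\<close> cycles
  has degree \<open>2 c\<close>, and in a chemical graph \<open>c \<in> {1, 2}\<close>. Deleting one edge from each of the
  edge-disjoint cycles leaves a spanning tree, so \<open>n + k = m + 1\<close>; with the handshake lemma
  this shows that \<open>k - 1\<close> is the number of vertices of degree 4, and applying the same identity
  to \<open>G - v\<close> shows that each of them is an articulation point. Finally \<open>1 / sqrt (d\<^sub>u d\<^sub>v)\<close>
  is split into vertex weights \<open>w 2 = 1/4\<close>, \<open>w 4 = (sqrt 2 - 1)/4\<close>: the split is exact on every
  edge except those joining two vertices of degree 4, where it underestimates, and the weights
  sum to \<open>n/2 - (k - 1)(3/2 - sqrt 2)\<close> over the vertices.\<close>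

section \<open>Paths and cycles\<close>

lemma reachable_refl: "reachable W F x x"
  unfolding reachable_def by simp

lemma reachable_trans:
  "reachable W F x y \<Longrightarrow> reachable W F y z \<Longrightarrow> reachable W F x z"
  unfolding reachable_def by (rule rtranclp_trans)

lemma reachable_sym:
  assumes "reachable W F x y" shows "reachable W F y x"
  using assms unfolding reachable_def
  by (induction rule: rtranclp_induct)
     (auto simp: adj_def insert_commute intro: converse_rtranclp_into_rtranclp)

lemma reachable_edge:
  "x \<in> W \<Longrightarrow> y \<in> W \<Longrightarrow> x \<noteq> y \<Longrightarrow> {x, y} \<in> F \<Longrightarrow> reachable W F x y"
  unfolding reachable_def by (rule r_into_rtranclp) (simp add: adj_def)

lemma reachable_mono:
  assumes "W \<subseteq> W'" "F \<subseteq> F'" "reachable W F x y"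
  shows "reachable W' F' x y"
proof -
  have "(\<lambda>x y. x \<in> W \<and> y \<in> W \<and> adj F x y) \<le> (\<lambda>x y. x \<in> W' \<and> y \<in> W' \<and> adj F' x y)"
    using assms(1,2) by (auto simp: adj_def)
  then show ?thesis
    using assms(3) rtranclp_mono unfolding reachable_def by blast
qed

lemma finite_Union_edges: "finite F \<Longrightarrow> \<forall>e\<in>F. card e = 2 \<Longrightarrow> finite (\<Union>F)"
  by (metis card.infinite finite_Union zero_neq_numeral)

lemma finite_edges: "finite W \<Longrightarrow> \<forall>e\<in>F. e \<subseteq> W \<Longrightarrow> finite F"
  by (metis Pow_iff finite_Pow_iff finite_subset subsetI)

lemma card_2_eq_doubleton_other:
  assumes "card e = 2" "z \<in> e" obtains y where "e = {z, y}" "y \<noteq> z"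
  using assms by (metis card_2_iff doubleton_eq_iff insertE singletonD)

definition is_path :: "'a set set \<Rightarrow> 'a list \<Rightarrow> bool" where
  "is_path F xs \<longleftrightarrow> distinct xs \<and> (\<forall>i. Suc i < length xs \<longrightarrow> {xs!i, xs!Suc i} \<in> F)"

definition cycle_of_list :: "'a list \<Rightarrow> 'a set set" where
  "cycle_of_list xs = (\<lambda>i. {xs!i, xs!(Suc i mod length xs)}) ` {..<length xs}"

lemma is_path_mono: "F \<subseteq> F' \<Longrightarrow> is_path F xs \<Longrightarrow> is_path F' xs"
  unfolding is_path_def by blast

lemma is_path_drop: "is_path F xs \<Longrightarrow> is_path F (drop k xs)"
  unfolding is_path_def by (simp add: add.commute[of k])

lemma is_path_snoc:
  assumes "is_path F xs" "xs \<noteq> []" "y \<notin> set xs" "{last xs, y} \<in> F"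
  shows "is_path F (xs @ [y])"
  unfolding is_path_def
proof (intro conjI allI impI)
  show "distinct (xs @ [y])" using assms(1,3) by (simp add: is_path_def)
  fix i assume i: "Suc i < length (xs @ [y])"
  show "{(xs @ [y])!i, (xs @ [y])!Suc i} \<in> F"
  proof (cases "Suc i < length xs")
    case True then show ?thesis using assms(1) by (simp add: nth_append is_path_def)
  next
    case False
    then have "i = length xs - 1" using i by simp
    then show ?thesis using assms(2,4) by (simp add: nth_append last_conv_nth)
  qed
qed

lemma set_path_subset_Union:
  assumes "is_path F xs" "length xs \<ge> 2" shows "set xs \<subseteq> \<Union>F"
proof
  fix v assume "v \<in> set xs"
  then obtain j where j: "j < length xs" "xs!j = v" by (auto simp: in_set_conv_nth)
  show "v \<in> \<Union>F"
  proof (cases "Suc j < length xs")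
    case True then have "{xs!j, xs!Suc j} \<in> F" using assms(1) by (simp add: is_path_def)
    then show ?thesis using j by blast
  next
    case False then have "Suc (j - 1) < length xs" "Suc (j - 1) = j" using j assms(2) by auto
    then have "{xs!(j - 1), xs!j} \<in> F" using assms(1) unfolding is_path_def by metis
    then show ?thesis using j by blast
  qed
qed

lemma reachable_imp_path:
  assumes "reachable W F x y"
  obtains xs where "is_path F xs" "xs \<noteq> []" "hd xs = x" "last xs = y"
proof -
  have "\<exists>xs. is_path F xs \<and> xs \<noteq> [] \<and> hd xs = x \<and> last xs = y"
    using assms unfolding reachable_def
  proof (induction rule: converse_rtranclp_induct)
    case base show ?case by (rule exI[of _ "[y]"]) (simp add: is_path_def)
  next
    case (step x z)
    from step.IH obtain xs where xs: "is_path F xs" "xs \<noteq> []" "hd xs = z" "last xs = y"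
      by blast
    from step.hyps(1) have e: "{x, z} \<in> F" "x \<noteq> z" by (auto simp: adj_def)
    show ?case
    proof (cases "x \<in> set xs")
      case True
      \<comment> \<open>cut the path at \<open>x\<close> to keep it simple\<close>
      then obtain k where k: "k < length xs" "xs!k = x" by (auto simp: in_set_conv_nth)
      then show ?thesis
        using xs is_path_drop[OF xs(1)] by (intro exI[of _ "drop k xs"]) (simp add: hd_drop_conv_nth)
    next
      case False
      have "is_path F (x # xs)"
        using xs e False unfolding is_path_def
        by (auto simp: nth_Cons hd_conv_nth split: nat.split)
      then show ?thesis using xs by (intro exI[of _ "x # xs"]) auto
    qed
  qed
  then show thesis using that by blast
qed

lemma Union_cycle_of_list: "xs \<noteq> [] \<Longrightarrow> \<Union>(cycle_of_list xs) = set xs"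
  unfolding cycle_of_list_def by (auto simp: in_set_conv_nth intro!: nth_mem)

lemma closing_edge_in_cycle_of_list:
  assumes "xs \<noteq> []" shows "{last xs, hd xs} \<in> cycle_of_list xs"
proof -
  have "Suc (length xs - 1) mod length xs = 0" using assms by simp
  then show ?thesis
    using assms unfolding cycle_of_list_def
    by (intro image_eqI[of _ _ "length xs - 1"]) (auto simp: last_conv_nth hd_conv_nth)
qed

lemma cycle_of_list_subset:
  assumes "is_path F xs" "{last xs, hd xs} \<in> F"
  shows "cycle_of_list xs \<subseteq> F"
proof
  fix e assume "e \<in> cycle_of_list xs"
  then obtain i where i: "i < length xs" "e = {xs!i, xs!(Suc i mod length xs)}"
    unfolding cycle_of_list_def by auto
  show "e \<in> F"
  proof (cases "Suc i < length xs")
    case True then show ?thesis using i assms(1) unfolding is_path_def by auto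
  next
    case False
    then have "Suc i = length xs" "length xs - 1 = i" "xs \<noteq> []" using i by auto
    then have "e = {last xs, hd xs}" using i by (simp add: last_conv_nth hd_conv_nth)
    then show ?thesis using assms(2) by simp
  qed
qed

lemma Suc_mod_neq: "i < l \<Longrightarrow> 2 \<le> l \<Longrightarrow> Suc i mod l \<noteq> i"
  by (cases "Suc i = l") auto

lemma pred_mod_Suc_mod: "i < l \<Longrightarrow> (Suc i mod l + l - 1) mod l = i"
  by (cases "Suc i = l") auto

lemma Suc_mod_pred_mod: "j < l \<Longrightarrow> Suc ((j + l - 1) mod l) mod l = j"
  by (metis Suc_diff_1 add_gr_0 mod_Suc_eq mod_add_self2 mod_less not_gr_zero)

lemma Suc_mod_neq_pred_mod: "j < l \<Longrightarrow> 3 \<le> l \<Longrightarrow> Suc j mod l \<noteq> (j + l - 1) mod l"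
  by (cases "Suc j < l"; cases j) (auto simp: le_mod_geq)

lemma card_edge_cycle_of_list:
  assumes "distinct xs" "length xs \<ge> 2" "e \<in> cycle_of_list xs" shows "card e = 2"
proof -
  obtain i where i: "i < length xs" "e = {xs!i, xs!(Suc i mod length xs)}"
    using assms(3) unfolding cycle_of_list_def by auto
  have "0 < length xs" using i(1) by linarith
  then have "Suc i mod length xs < length xs" by simp
  then have "xs!i \<noteq> xs!(Suc i mod length xs)"
    using assms(1,2) i(1) Suc_mod_neq[OF i(1)] by (simp add: nth_eq_iff_index_eq)
  then show ?thesis using i(2) by simp
qed

lemma degree_cycle_of_list:
  assumes d: "distinct xs" and l3: "length xs \<ge> 3" and v: "v \<in> set xs"
  shows "degree (cycle_of_list xs) v = 2"
proof -
  let ?l = "length xs"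
  let ?E = "\<lambda>i. {xs!i, xs!(Suc i mod ?l)}"
  have idx: "\<And>i j. i < ?l \<Longrightarrow> j < ?l \<Longrightarrow> xs!i = xs!j \<longleftrightarrow> i = j"
    using d by (simp add: nth_eq_iff_index_eq)
  obtain j where j: "j < ?l" "xs!j = v" using v by (auto simp: in_set_conv_nth)
  let ?p = "(j + ?l - 1) mod ?l"
  have "0 < ?l" using j by linarith
  then have pl: "?p < ?l" and sl: "Suc j mod ?l < ?l" by simp_all
  have "{e \<in> cycle_of_list xs. v \<in> e} = {?E j, ?E ?p}"
  proof
    show "{e \<in> cycle_of_list xs. v \<in> e} \<subseteq> {?E j, ?E ?p}"
    proof
      fix e assume "e \<in> {e \<in> cycle_of_list xs. v \<in> e}"
      then obtain i where i: "i < ?l" "e = ?E i" "v \<in> ?E i" unfolding cycle_of_list_def by auto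
      have "Suc i mod ?l < ?l" using \<open>0 < ?l\<close> by simp
      then have "j = i \<or> j = Suc i mod ?l" using i j idx by auto
      then have "i = j \<or> i = ?p" using pred_mod_Suc_mod[OF i(1)] by auto
      then show "e \<in> {?E j, ?E ?p}" using i by auto
    qed
    show "{?E j, ?E ?p} \<subseteq> {e \<in> cycle_of_list xs. v \<in> e}"
      using j pl Suc_mod_pred_mod[OF j(1)] unfolding cycle_of_list_def by auto
  qed
  moreover have "?E j \<noteq> ?E ?p"
  proof
    assume "?E j = ?E ?p"
    then have "{xs!j, xs!(Suc j mod ?l)} = {xs!?p, xs!j}"
      using Suc_mod_pred_mod[OF j(1)] by simp
    moreover have "xs!(Suc j mod ?l) \<noteq> xs!j"
      using idx[OF sl j(1)] Suc_mod_neq[OF j(1)] l3 by simp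
    ultimately have "xs!(Suc j mod ?l) = xs!?p" by (auto simp: doubleton_eq_iff)
    then show False using idx sl pl Suc_mod_neq_pred_mod[OF j(1) l3] by blast
  qed
  ultimately show ?thesis unfolding degree_def by simp
qed

lemma connected_cycle_of_list:
  assumes d: "distinct xs" and ne: "xs \<noteq> []"
  shows "connected_graph (set xs) (cycle_of_list xs)"
proof -
  let ?l = "length xs"
  have from_hd: "reachable (set xs) (cycle_of_list xs) (xs!0) (xs!i)" if "i < ?l" for i
    using that
  proof (induction i)
    case 0 show ?case by (rule reachable_refl)
  next
    case (Suc i)
    have "{xs!i, xs!Suc i} \<in> cycle_of_list xs"
      using Suc.prems unfolding cycle_of_list_def by (intro image_eqI[of _ _ i]) auto
    moreover have "xs!i \<noteq> xs!Suc i" using d Suc.prems by (simp add: nth_eq_iff_index_eq)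
    ultimately have "reachable (set xs) (cycle_of_list xs) (xs!i) (xs!Suc i)"
      using Suc.prems by (intro reachable_edge) auto
    then show ?case using Suc reachable_trans by fastforce
  qed
  show ?thesis
    unfolding connected_graph_def
  proof (intro conjI ballI)
    show "set xs \<noteq> {}" using ne by simp
    fix u v assume "u \<in> set xs" "v \<in> set xs"
    then obtain i j where "i < ?l" "u = xs!i" "j < ?l" "v = xs!j" by (auto simp: in_set_conv_nth)
    then show "reachable (set xs) (cycle_of_list xs) u v"
      using from_hd reachable_sym reachable_trans by metis
  qed
qed

lemma is_cycle_cycle_of_list:
  assumes "distinct xs" "length xs \<ge> 3"
  shows "is_cycle (cycle_of_list xs)"
proof -
  have ne: "xs \<noteq> []" using assms(2) by auto
  then have "cycle_of_list xs \<noteq> {}" using closing_edge_in_cycle_of_list by blast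
  moreover have "finite (cycle_of_list xs)" by (simp add: cycle_of_list_def)
  ultimately show ?thesis
    unfolding is_cycle_def Union_cycle_of_list[OF ne]
    using assms ne card_edge_cycle_of_list[of xs] degree_cycle_of_list[of xs]
      connected_cycle_of_list[of xs]
    by simp
qed

lemma cycles_mono: "F \<subseteq> F' \<Longrightarrow> cycles F \<subseteq> cycles F'"
  unfolding cycles_def by blast

lemma closed_path_in_cycles:
  assumes "is_path F xs" "length xs \<ge> 3" "{last xs, hd xs} \<in> F"
  shows "cycle_of_list xs \<in> cycles F"
  using assms cycle_of_list_subset is_cycle_cycle_of_list
  unfolding cycles_def is_path_def by blast

section \<open>Degree sums, forests and the cycle rank\<close>

lemma sum_degree_weighted:
  fixes h :: "'a \<Rightarrow> 'b::comm_semiring_1"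
  assumes "finite K" "finite F"
  shows "(\<Sum>v\<in>K. of_nat (degree F v) * h v) = (\<Sum>e\<in>F. \<Sum>v\<in>K \<inter> e. h v)"
proof -
  have "(\<Sum>v\<in>K. of_nat (degree F v) * h v) = (\<Sum>v\<in>K. \<Sum>e\<in>{e\<in>F. v \<in> e}. h v)"
    by (simp add: degree_def)
  also have "\<dots> = (\<Sum>e\<in>F. \<Sum>v\<in>{v\<in>K. v \<in> e}. h v)"
    using assms by (rule sum.swap_restrict)
  also have "\<dots> = (\<Sum>e\<in>F. \<Sum>v\<in>K \<inter> e. h v)"
    by (simp add: Int_def)
  finally show ?thesis .
qed

lemma sum_degree_eq_twice_card_edges:
  assumes "finite V" "finite E" "\<forall>e\<in>E. e \<subseteq> V \<and> card e = 2"
  shows "(\<Sum>v\<in>V. degree E v) = 2 * card E"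
proof -
  have "(\<Sum>v\<in>V. degree E v) = (\<Sum>e\<in>E. card (V \<inter> e))"
    using sum_degree_weighted[OF assms(1,2), where h = "\<lambda>_. 1::nat"] by simp
  also have "\<dots> = (\<Sum>e\<in>E. 2)"
    using assms(3) by (intro sum.cong) (auto simp: Int_absorb1)
  finally show ?thesis by simp
qed

lemma even_sum_degree_if_closed:
  assumes "finite K" "finite F" "\<forall>e\<in>F. card e = 2" "\<forall>e\<in>F. e \<inter> K \<noteq> {} \<longrightarrow> e \<subseteq> K"
  shows "even (\<Sum>v\<in>K. degree F v)"
proof -
  have "(\<Sum>v\<in>K. degree F v) = (\<Sum>e\<in>F. card (K \<inter> e))"
    using sum_degree_weighted[OF assms(1,2), where h = "\<lambda>_. 1::nat"] by simp
  moreover have "even (card (K \<inter> e))" if "e \<in> F" for e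
  proof (cases "e \<inter> K = {}")
    case False
    then have "K \<inter> e = e" using assms(4) that by blast
    then show ?thesis using assms(3) that by simp
  qed (simp add: Int_commute)
  ultimately show ?thesis by (simp add: dvd_sum)
qed

lemma degree_ge_2_obtain_neighbour:
  assumes "finite F" "\<forall>e\<in>F. card e = 2" "degree F z \<ge> 2"
  obtains y where "{z, y} \<in> F" "y \<noteq> z" "y \<noteq> w"
proof -
  have "\<not> card {e\<in>F. z \<in> e} \<le> Suc 0" using assms(3) by (simp add: degree_def)
  then obtain e1 e2 where e: "e1 \<in> F" "z \<in> e1" "e2 \<in> F" "z \<in> e2" "e1 \<noteq> e2"
    using card_le_Suc0_iff_eq[of "{e\<in>F. z \<in> e}"] assms(1) by auto
  obtain y1 y2 where "e1 = {z, y1}" "y1 \<noteq> z" "e2 = {z, y2}" "y2 \<noteq> z"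
    using e assms(2) card_2_eq_doubleton_other by metis
  then show ?thesis using that e by (cases "y1 = w") auto
qed

lemma cycle_if_degree_ge_2:
  assumes fin: "finite F" and c2: "\<forall>e\<in>F. card e = 2" and ne: "F \<noteq> {}"
    and deg: "\<forall>w\<in>\<Union>F. degree F w \<ge> 2"
  shows "cycles F \<noteq> {}"
proof -
  \<comment> \<open>take a longest path; the last vertex has a second neighbour, which must lie on the path\<close>
  let ?P = "\<lambda>xs. is_path F xs \<and> length xs \<ge> 2"
  have bnd: "length xs \<le> card (\<Union>F)" if "?P xs" for xs
    using that set_path_subset_Union[of F xs] finite_Union_edges[OF fin c2]
    by (metis card_mono distinct_card is_path_def)
  obtain a b where ab: "{a, b} \<in> F" "a \<noteq> b"
    using ne c2 by (metis card_2_iff ex_in_conv)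
  have "?P [a, b]" using ab by (auto simp: is_path_def less_Suc_eq)
  then obtain xs where xs: "?P xs" and longest: "\<And>ys. ?P ys \<Longrightarrow> length ys \<le> length xs"
    using ex_has_greatest_nat[of ?P "[a, b]" length "Suc (card (\<Union>F))"] bnd by force
  define l where "l = length xs"
  have l2: "l \<ge> 2" and ne_xs: "xs \<noteq> []" using xs l_def by auto
  have z: "last xs = xs!(l - 1)" using ne_xs l_def by (simp add: last_conv_nth)
  have "last xs \<in> \<Union>F" using set_path_subset_Union[of F xs] xs ne_xs last_in_set by blast
  then obtain y where y: "{last xs, y} \<in> F" "y \<noteq> last xs" "y \<noteq> xs!(l - 2)"
    using degree_ge_2_obtain_neighbour fin c2 deg by metis
  have "y \<in> set xs"
  proof (rule ccontr)
    assume "y \<notin> set xs"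
    then have "?P (xs @ [y])" using xs ne_xs y(1) is_path_snoc by auto
    then show False using longest by fastforce
  qed
  then obtain j where j: "j < l" "xs!j = y" by (auto simp: in_set_conv_nth l_def)
  have "j \<noteq> l - 1" "j \<noteq> l - 2" using j y z by auto
  then have "length (drop j xs) \<ge> 3" using j l_def by simp
  moreover have "hd (drop j xs) = y" "last (drop j xs) = last xs"
    using j l_def by (simp_all add: hd_drop_conv_nth)
  ultimately have "cycle_of_list (drop j xs) \<in> cycles F"
    using xs y(1) is_path_drop by (intro closed_path_in_cycles) (auto simp: insert_commute)
  then show ?thesis by blast
qed

lemma card_Union_if_acyclic:
  "finite F \<Longrightarrow> \<forall>e\<in>F. card e = 2 \<Longrightarrow> cycles F = {} \<Longrightarrow> F \<noteq> {} \<Longrightarrow> card F + 1 \<le> card (\<Union>F)"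
proof (induction "card F" arbitrary: F rule: less_induct)
  case less
  have finF: "finite F" and fU: "finite (\<Union>F)" using less.prems finite_Union_edges by blast+
  \<comment> \<open>remove the edge at a leaf\<close>
  obtain w where w: "w \<in> \<Union>F" "degree F w < 2"
    using cycle_if_degree_ge_2[of F] less.prems by (meson not_le)
  have "{e\<in>F. w \<in> e} \<noteq> {}" using w(1) by blast
  then have "card {e\<in>F. w \<in> e} \<noteq> 0" using finF by simp
  then have "card {e\<in>F. w \<in> e} = 1" using w(2) unfolding degree_def by linarith
  then obtain f where f: "{e\<in>F. w \<in> e} = {f}" by (rule card_1_singletonE)
  then have fF: "f \<in> F" and only_f: "\<And>e. e \<in> F \<Longrightarrow> w \<in> e \<Longrightarrow> e = f" by auto
  have cardF: "card F = card (F - {f}) + 1" using fF finF card.remove by fastforce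
  show ?case
  proof (cases "F - {f} = {}")
    case True
    then have "F = {f}" using fF by auto
    then show ?thesis using less.prems by simp
  next
    case False
    have "cycles (F - {f}) = {}" using cycles_mono[of "F - {f}" F] less.prems by blast
    then have "card (F - {f}) + 1 \<le> card (\<Union>(F - {f}))"
      using less.hyps[of "F - {f}"] cardF less.prems False by simp
    also have "\<dots> \<le> card (\<Union>F - {w})"
      using only_f fU by (intro card_mono) auto
    also have "\<dots> = card (\<Union>F) - 1" using w(1) fU by simp
    finally show ?thesis using cardF w(1) fU card_gt_0_iff by fastforce
  qed
qed

lemma card_le_Suc_card_edges_if_connected:
  assumes "finite V" "finite E" "connected_graph V E"
  shows "card V \<le> card E + 1"
proof -
  \<comment> \<open>every vertex except a root \<open>r\<close> gets an edge to a parent strictly closer to \<open>r\<close>\<close>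
  obtain r where r: "r \<in> V" using assms(3) by (auto simp: connected_graph_def)
  define R where "R = (\<lambda>x y. x \<in> V \<and> y \<in> V \<and> adj E x y)"
  have ex: "\<exists>n. (R^^n) v r" if "v \<in> V" for v
    using assms(3) that r unfolding connected_graph_def reachable_def R_def
    by (simp add: rtranclp_power)
  define d where "d v = (LEAST n. (R^^n) v r)" for v
  have dR: "(R^^d v) v r" if "v \<in> V" for v using ex[OF that] unfolding d_def by (rule LeastI_ex)
  have dmin: "d v \<le> n" if "(R^^n) v r" for v n unfolding d_def using that by (rule Least_le)
  have parent: "\<exists>y. R v y \<and> d y < d v" if v: "v \<in> V - {r}" for v
  proof -
    have "d v \<noteq> 0" using dR v by (metis DiffE insertI1 relpowp_0_E)
    then obtain m where m: "d v = Suc m" by (cases "d v") auto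
    then obtain y where y: "R v y" "(R^^m) y r" using dR v relpowp_Suc_E2 by (metis DiffD1)
    then show ?thesis using dmin[OF y(2)] m by auto
  qed
  then obtain p where p: "\<And>v. v \<in> V - {r} \<Longrightarrow> R v (p v) \<and> d (p v) < d v" by metis
  have "inj_on (\<lambda>v. {v, p v}) (V - {r})"
  proof (rule inj_onI)
    fix v u assume v: "v \<in> V - {r}" and u: "u \<in> V - {r}" and eq: "{v, p v} = {u, p u}"
    show "v = u"
    proof (rule ccontr)
      assume "v \<noteq> u"
      then have "v = p u" "u = p v" using eq by (auto simp: doubleton_eq_iff)
      then show False using p[OF u] p[OF v] by simp
    qed
  qed
  moreover have "(\<lambda>v. {v, p v}) ` (V - {r}) \<subseteq> E" using p by (auto simp: R_def adj_def)
  ultimately have "card (V - {r}) \<le> card E" using assms(2) by (metis card_inj_on_le)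
  then show ?thesis using r assms(1) by simp
qed

lemma card_vertices_if_tree:
  assumes "finite W" "\<forall>e\<in>F. e \<subseteq> W \<and> card e = 2" "connected_graph W F" "cycles F = {}"
  shows "card W = card F + 1"
proof -
  have finF: "finite F" using assms(1,2) finite_edges by blast
  have "card F + 1 \<le> card W"
  proof (cases "F = {}")
    case True
    then show ?thesis using assms(1,3) by (simp add: connected_graph_def Suc_leI card_gt_0_iff)
  next
    case False
    then have "card F + 1 \<le> card (\<Union>F)" using card_Union_if_acyclic finF assms(2,4) by blast
    also have "\<dots> \<le> card W" using assms(1,2) by (intro card_mono) auto
    finally show ?thesis .
  qed
  then show ?thesis using card_le_Suc_card_edges_if_connected[OF assms(1) finF assms(3)] by linarith
qed

lemma reachable_set_closed:
  fixes x :: 'a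
  assumes "\<forall>e\<in>F. e \<subseteq> U \<and> card e = 2"
  defines "K \<equiv> {w\<in>U. reachable U F x w}"
  shows "\<forall>e\<in>F. e \<inter> K \<noteq> {} \<longrightarrow> e \<subseteq> K"
proof (intro ballI impI subsetI)
  fix e b assume e: "e \<in> F" "e \<inter> K \<noteq> {}" and b: "b \<in> e"
  then obtain a where a: "a \<in> e" "a \<in> K" by blast
  show "b \<in> K"
  proof (cases "b = a")
    case False
    have "card e = 2" using assms(1) e(1) by blast
    then obtain b' where "e = {a, b'}" using a(1) by (rule card_2_eq_doubleton_other)
    then have "e = {a, b}" using b False by blast
    then have "reachable U F a b" using assms(1) e(1) False by (intro reachable_edge) auto
    moreover have "reachable U F x a" using a(2) by (simp add: K_def)
    ultimately have "reachable U F x b" by (rule reachable_trans[rotated])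
    moreover have "b \<in> U" using assms(1) b e(1) by blast
    ultimately show ?thesis by (simp add: K_def)
  qed (use a in simp)
qed

lemma reachable_cycle_minus_edge:
  assumes C: "is_cycle C" and s: "{x, y} \<in> C" "x \<noteq> y"
  shows "reachable (\<Union>C) (C - {{x, y}}) x y"
proof (rule ccontr)
  assume not_reach: "\<not> ?thesis"
  let ?U = "\<Union>C" and ?F = "C - {{x, y}}"
  define K where "K = {w\<in>?U. reachable ?U ?F x w}"
  have finC: "finite C" and c2: "\<forall>e\<in>C. card e = 2" and deg: "\<forall>v\<in>?U. degree C v = 2"
    using C by (auto simp: is_cycle_def)
  have fK: "finite K"
    using finite_Union_edges[OF finC c2] unfolding K_def by (rule rev_finite_subset) blast
  have xK: "x \<in> K" using s by (auto simp: K_def reachable_refl)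
  have yK: "y \<notin> K" using not_reach K_def by auto
  have closed: "\<forall>e\<in>?F. e \<inter> K \<noteq> {} \<longrightarrow> e \<subseteq> K"
    using c2 unfolding K_def by (intro reachable_set_closed) blast
  \<comment> \<open>the component \<open>K\<close> of \<open>x\<close> would have odd degree sum: \<open>x\<close> is its only vertex of degree 1\<close>
  have degK: "degree ?F v = (if v = x then 1 else 2)" if "v \<in> K" for v
  proof -
    have "v \<in> ?U" using that K_def by simp
    then have c: "card {e\<in>C. v \<in> e} = 2" using deg unfolding degree_def by blast
    show ?thesis
    proof (cases "v = x")
      case True
      then have "{e\<in>?F. v \<in> e} = {e\<in>C. v \<in> e} - {{x, y}}" by blast
      moreover have "{x, y} \<in> {e\<in>C. v \<in> e}" using s True by simp
      ultimately show ?thesis using c True by (simp add: degree_def)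
    next
      case False
      then have "{e\<in>?F. v \<in> e} = {e\<in>C. v \<in> e}" using that yK by blast
      then show ?thesis using c False by (simp add: degree_def)
    qed
  qed
  have "(\<Sum>v\<in>K. degree ?F v) = (\<Sum>v\<in>K. if v = x then 1 else 2)"
    using degK by (intro sum.cong) auto
  also have "\<dots> = 1 + (\<Sum>v\<in>K - {x}. 2)"
    using sum.remove[OF fK xK, of "\<lambda>v. if v = x then 1 else 2::nat"] by simp
  also have "\<dots> = 1 + 2 * card (K - {x})" by simp
  finally have "odd (\<Sum>v\<in>K. degree ?F v)" by simp
  moreover have "even (\<Sum>v\<in>K. degree ?F v)"
    using even_sum_degree_if_closed[OF fK _ _ closed] finC c2 by simp
  ultimately show False by contradiction
qed

lemma reachable_delete_cycle_edges:
  assumes "reachable W F a b"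
    and "\<And>s. s \<in> F - F' \<Longrightarrow> \<exists>C\<in>cycles F. s \<in> C \<and> C - {s} \<subseteq> F' \<and> \<Union>C \<subseteq> W"
  shows "reachable W F' a b"
  using assms(1) unfolding reachable_def[of W F]
proof (induction rule: rtranclp_induct)
  case base show ?case by (rule reachable_refl)
next
  case (step b c)
  have bc: "b \<in> W" "c \<in> W" "b \<noteq> c" "{b, c} \<in> F" using step.hyps(2) by (auto simp: adj_def)
  have "reachable W F' b c"
  proof (cases "{b, c} \<in> F'")
    case True then show ?thesis using bc by (intro reachable_edge) auto
  next
    case False
    then obtain C where C: "C \<in> cycles F" "{b, c} \<in> C" "C - {{b, c}} \<subseteq> F'" "\<Union>C \<subseteq> W"
      using assms(2)[of "{b, c}"] bc(4) by blast
    have "is_cycle C" using C(1) by (simp add: cycles_def)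
    from reachable_cycle_minus_edge[OF this C(2) bc(3)]
    show ?thesis by (rule reachable_mono[OF C(4) C(3)])
  qed
  with step.IH show ?case by (rule reachable_trans)
qed

lemma delete_cycle_representatives:
  assumes es: "\<forall>e\<in>F. e \<subseteq> W" and conn: "connected_graph W F"
    and disj: "\<forall>C1\<in>cycles F. \<forall>C2\<in>cycles F. C1 \<noteq> C2 \<longrightarrow> C1 \<inter> C2 = {}"
    and fC: "\<And>C. C \<in> cycles F \<Longrightarrow> f C \<in> C"
  shows "connected_graph W (F - f ` cycles F)" and "cycles (F - f ` cycles F) = {}"
proof -
  define F' where "F' = F - f ` cycles F"
  have CF: "C \<subseteq> F" if "C \<in> cycles F" for C using that by (simp add: cycles_def)
  have kept: "C - {f C} \<subseteq> F'" if C: "C \<in> cycles F" for C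
  proof
    fix e assume e: "e \<in> C - {f C}"
    have "e \<noteq> f C'" if "C' \<in> cycles F" for C'
    proof
      assume "e = f C'"
      then have "e \<in> C \<inter> C'" using e fC[OF that] by simp
      then have "C' = C" using disj C that by blast
      then show False using e \<open>e = f C'\<close> by simp
    qed
    then show "e \<in> F'" using e CF[OF C] by (auto simp: F'_def)
  qed
  have "reachable W F' u v" if "u \<in> W" "v \<in> W" for u v
  proof (rule reachable_delete_cycle_edges)
    show "reachable W F u v" using conn that by (simp add: connected_graph_def)
    fix s assume "s \<in> F - F'"
    then obtain C where C: "C \<in> cycles F" "s = f C" by (auto simp: F'_def)
    have "\<Union>C \<subseteq> W" using CF[OF C(1)] es by blast
    then show "\<exists>C\<in>cycles F. s \<in> C \<and> C - {s} \<subseteq> F' \<and> \<Union>C \<subseteq> W"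
      using C fC[OF C(1)] kept[OF C(1)] by blast
  qed
  then show "connected_graph W (F - f ` cycles F)"
    using conn by (simp add: connected_graph_def F'_def)
  have "f C \<notin> C" if "C \<in> cycles F'" for C
    using that unfolding F'_def cycles_def by auto
  moreover have "cycles F' \<subseteq> cycles F" using cycles_mono F'_def by blast
  ultimately show "cycles (F - f ` cycles F) = {}" using fC F'_def by blast
qed

lemma card_vertices_add_card_cycles:
  assumes finW: "finite W" and es: "\<forall>e\<in>F. e \<subseteq> W \<and> card e = 2"
    and conn: "connected_graph W F"
    and disj: "\<forall>C1\<in>cycles F. \<forall>C2\<in>cycles F. C1 \<noteq> C2 \<longrightarrow> C1 \<inter> C2 = {}"
  shows "card W + card (cycles F) = card F + 1"
proof -
  \<comment> \<open>deleting one edge \<open>f C\<close> from each cycle leaves a spanning tree\<close>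
  have "\<forall>C\<in>cycles F. \<exists>e. e \<in> C" by (auto simp: cycles_def is_cycle_def)
  then obtain f where fC: "\<And>C. C \<in> cycles F \<Longrightarrow> f C \<in> C" by metis
  have "inj_on f (cycles F)"
  proof (rule inj_onI)
    fix C1 C2 assume C: "C1 \<in> cycles F" "C2 \<in> cycles F" "f C1 = f C2"
    then have "f C1 \<in> C1 \<inter> C2" using fC by (metis IntI)
    then show "C1 = C2" using disj C(1,2) by blast
  qed
  then have card_S: "card (f ` cycles F) = card (cycles F)" by (rule card_image)
  have S_F: "f ` cycles F \<subseteq> F" using fC by (auto simp: cycles_def)
  have "card W = card (F - f ` cycles F) + 1"
    using delete_cycle_representatives[of F W f] es conn disj fC finW
    by (intro card_vertices_if_tree) auto
  moreover have "finite F" using finW es finite_edges by blast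
  then have "card (F - f ` cycles F) + card (f ` cycles F) = card F"
    using S_F by (metis card_Diff_subset card_mono finite_subset le_add_diff_inverse2)
  ultimately show ?thesis using card_S by linarith
qed

section \<open>Bridgeless cacti\<close>

lemma degree_cycle: "is_cycle C \<Longrightarrow> degree C v = (if v \<in> \<Union>C then 2 else 0)"
  unfolding is_cycle_def degree_def by auto

lemma finite_cycles: "finite E \<Longrightarrow> finite (cycles E)"
  by (rule finite_subset[of _ "Pow E"]) (auto simp: cycles_def)

lemma degree_eq_twice_card_cycles:
  assumes "finite E" and covered: "\<forall>e\<in>E. \<exists>C\<in>cycles E. e \<in> C"
    and disj: "\<forall>C1\<in>cycles E. \<forall>C2\<in>cycles E. C1 \<noteq> C2 \<longrightarrow> C1 \<inter> C2 = {}"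
  shows "degree E v = 2 * card {C\<in>cycles E. v \<in> \<Union>C}"
proof -
  have CE: "C \<subseteq> E" if "C \<in> cycles E" for C using that by (simp add: cycles_def)
  have fin: "finite (cycles E)" using assms(1) by (rule finite_cycles)
  have "{e\<in>E. v \<in> e} = (\<Union>C\<in>cycles E. {e\<in>C. v \<in> e})" using covered CE by blast
  then have "degree E v = card (\<Union>C\<in>cycles E. {e\<in>C. v \<in> e})" by (simp add: degree_def)
  also have "\<dots> = (\<Sum>C\<in>cycles E. card {e\<in>C. v \<in> e})"
  proof (rule card_UN_disjoint[OF fin])
    show "\<forall>C\<in>cycles E. finite {e\<in>C. v \<in> e}"
      using CE assms(1) by (blast intro: finite_subset)
    show "\<forall>C1\<in>cycles E. \<forall>C2\<in>cycles E. C1 \<noteq> C2 \<longrightarrow> {e\<in>C1. v \<in> e} \<inter> {e\<in>C2. v \<in> e} = {}"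
      using disj by blast
  qed
  also have "\<dots> = (\<Sum>C\<in>cycles E. if v \<in> \<Union>C then 2 else 0)"
  proof (rule sum.cong[OF refl])
    fix C assume "C \<in> cycles E"
    then show "card {e\<in>C. v \<in> e} = (if v \<in> \<Union>C then 2 else 0)"
      using degree_cycle[of C v] by (simp add: cycles_def degree_def)
  qed
  also have "\<dots> = 2 * card {C\<in>cycles E. v \<in> \<Union>C}"
    using fin by (simp add: sum.If_cases Int_def)
  finally show ?thesis .
qed

lemma cactus_cycles_disjoint:
  assumes "simple_graph V E" "cactus V E" "C1 \<in> cycles E" "C2 \<in> cycles E" "C1 \<noteq> C2"
  shows "C1 \<inter> C2 = {}"
proof (rule ccontr)
  assume "C1 \<inter> C2 \<noteq> {}"
  then obtain e where e: "e \<in> C1" "e \<in> C2" by blast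
  have "e \<in> E" using e(1) assms(3) by (auto simp: cycles_def)
  then have "card e = 2" using assms(1) by (simp add: simple_graph_def)
  moreover have "e \<subseteq> \<Union>C1 \<inter> \<Union>C2" using e by blast
  moreover have "\<Union>C1 \<subseteq> V" using assms(1,3) by (auto simp: simple_graph_def cycles_def)
  then have "finite (\<Union>C1 \<inter> \<Union>C2)" using assms(1) by (auto simp: simple_graph_def intro: finite_subset)
  ultimately have "2 \<le> card (\<Union>C1 \<inter> \<Union>C2)" by (metis card_mono)
  moreover have "card (\<Union>C1 \<inter> \<Union>C2) \<le> 1" using assms(2-5) by (auto simp: cactus_def)
  ultimately show False by simp
qed

lemma edge_in_cycle_if_not_bridge:
  assumes "simple_graph V E" "e \<in> E" "\<not> is_bridge V E e"
  obtains C where "C \<in> cycles E" "e \<in> C"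
proof -
  obtain u v where uv: "e = {u, v}" "u \<noteq> v"
    using assms(1,2) by (auto simp: simple_graph_def card_2_iff)
  have "u \<in> V" "v \<in> V" using assms(1,2) uv by (auto simp: simple_graph_def)
  then have "reachable V (E - {e}) v u"
    using assms(2,3) by (simp add: is_bridge_def connected_graph_def)
  then obtain xs where xs: "is_path (E - {e}) xs" "xs \<noteq> []" "hd xs = v" "last xs = u"
    by (rule reachable_imp_path)
  have "length xs \<ge> 3"
  proof (rule ccontr)
    assume "\<not> length xs \<ge> 3"
    moreover have "length xs > 0" using xs(2) by simp
    ultimately consider "length xs = 1" | "length xs = 2" by linarith
    then show False
    proof cases
      case 1
      then have "hd xs = last xs" by (cases xs) auto
      then show ?thesis using xs uv by simp
    next
      case 2
      then have "{xs!0, xs!1} \<in> E - {e}" using xs(1) by (simp add: is_path_def)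
      moreover have "xs!0 = v" "xs!1 = u" using xs(2-4) 2 by (simp_all add: hd_conv_nth last_conv_nth)
      ultimately show ?thesis using uv by (auto simp: insert_commute)
    qed
  qed
  moreover have "is_path E xs" using xs(1) by (rule is_path_mono[rotated]) blast
  moreover have "{last xs, hd xs} = e" using xs uv by simp
  ultimately have "cycle_of_list xs \<in> cycles E" "e \<in> cycle_of_list xs"
    using closed_path_in_cycles assms(2) closing_edge_in_cycle_of_list xs(2) by metis+
  then show thesis using that by blast
qed

locale nontrivial_cactus_graph =
  fixes V :: "'a set" and E :: "'a set set"
  assumes simple: "simple_graph V E" and nontrivial: "nontrivial_cactus V E"
begin

lemma finite_V: "finite V" and edges: "\<forall>e\<in>E. e \<subseteq> V \<and> card e = 2"
  using simple by (auto simp: simple_graph_def)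

lemma edgeE:
  assumes "e \<in> E" obtains x y where "e = {x, y}" "x \<noteq> y" "x \<in> V" "y \<in> V"
  using edges assms by (metis card_2_iff insert_subset)

lemma finite_E: "finite E"
  using finite_V edges finite_edges by blast

lemma connected: "connected_graph V E"
  using nontrivial by (simp add: nontrivial_cactus_def cactus_def)

lemma cycles_disjoint: "\<forall>C1\<in>cycles E. \<forall>C2\<in>cycles E. C1 \<noteq> C2 \<longrightarrow> C1 \<inter> C2 = {}"
  using cactus_cycles_disjoint[OF simple] nontrivial unfolding nontrivial_cactus_def by blast

lemma degree_eq_card_cycles: "degree E v = 2 * card {C\<in>cycles E. v \<in> \<Union>C}"
proof (rule degree_eq_twice_card_cycles[OF finite_E _ cycles_disjoint])
  show "\<forall>e\<in>E. \<exists>C\<in>cycles E. e \<in> C"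
    using edge_in_cycle_if_not_bridge[OF simple] nontrivial
    by (metis nontrivial_cactus_def)
qed

lemma card_V_add_card_cycles: "card V + card (cycles E) = card E + 1"
  using card_vertices_add_card_cycles[OF finite_V edges connected cycles_disjoint] .

text \<open>If \<open>v\<close> lies on \<open>c\<close> cycles, then \<open>G - v\<close> has one vertex, \<open>2 c\<close> edges and \<open>c\<close> cycles
  less than \<open>G\<close>; were it connected, the cycle rank identity for both graphs would force \<open>c = 1\<close>.\<close>
lemma articulation_point_if_degree_ge_4:
  assumes v: "v \<in> V" and deg: "degree E v \<ge> 4"
  shows "articulation_point V E v"
proof (rule ccontr)
  assume "\<not> articulation_point V E v"
  define W where "W = V - {v}"
  define Fv where "Fv = {e\<in>E. v \<notin> e}"
  define Cv where "Cv = {C\<in>cycles E. v \<in> \<Union>C}"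
  have reach: "\<forall>x\<in>W. \<forall>y\<in>W. reachable W Fv x y"
    using \<open>\<not> articulation_point V E v\<close> v unfolding articulation_point_def W_def Fv_def by blast
  have "\<forall>e\<in>E. card e = 2" "2 \<le> degree E v" using edges deg by auto
  then obtain u where "{v, u} \<in> E" "u \<noteq> v"
    using degree_ge_2_obtain_neighbour[OF finite_E] by blast
  then have "u \<in> W" using edges W_def by auto
  then have "connected_graph W Fv" using reach by (auto simp: connected_graph_def)
  moreover have cycles_Fv: "cycles Fv = cycles E - Cv"
    unfolding cycles_def Fv_def Cv_def by blast
  moreover have "\<forall>e\<in>Fv. e \<subseteq> W \<and> card e = 2" using edges unfolding Fv_def W_def by blast
  ultimately have "card W + card (cycles Fv) = card Fv + 1"
    using card_vertices_add_card_cycles[of W Fv] finite_V cycles_disjoint W_def by auto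
  moreover have "card W + 1 = card V" using v finite_V W_def card.remove by fastforce
  moreover have "card Fv + degree E v = card E"
  proof -
    have "Fv = E - {e\<in>E. v \<in> e}" by (auto simp: Fv_def)
    then show ?thesis using finite_E by (simp add: degree_def card_Diff_subset card_mono)
  qed
  moreover have "card (cycles Fv) + card Cv = card (cycles E)"
    using cycles_Fv finite_cycles[OF finite_E]
    by (simp add: Cv_def card_Diff_subset card_mono)
  moreover have "degree E v = 2 * card Cv" using degree_eq_card_cycles Cv_def by simp
  ultimately show False using card_V_add_card_cycles deg by linarith
qed

lemma degree_pos:
  assumes "card V \<ge> 2" "v \<in> V" shows "degree E v > 0"
proof -
  obtain u where u: "u \<in> V" "u \<noteq> v"
    using assms by (metis card_le_Suc0_iff_eq finite_V not_less_eq_eq numeral_2_eq_2)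
  then have "(\<lambda>x y. x \<in> V \<and> y \<in> V \<and> adj E x y)\<^sup>*\<^sup>* v u"
    using connected assms(2) by (simp add: connected_graph_def reachable_def)
  then obtain w where "adj E v w" using u(2) by (cases rule: converse_rtranclpE) auto
  then have "{v, w} \<in> {e\<in>E. v \<in> e}" by (simp add: adj_def)
  then show ?thesis using finite_E by (auto simp: degree_def card_gt_0_iff)
qed

end

section \<open>Vertex weights for the Randic index\<close>

lemma sum_edges_eq_sum_vertices:
  fixes h :: "'a \<Rightarrow> real"
  assumes "simple_graph V E"
  shows "(\<Sum>e\<in>E. \<Sum>v\<in>e. h v) = (\<Sum>v\<in>V. real (degree E v) * h v)"
proof -
  have fin: "finite V" "finite E" and sub: "\<forall>e\<in>E. e \<subseteq> V"
    using assms finite_edges by (auto simp: simple_graph_def)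
  have "(\<Sum>v\<in>V. real (degree E v) * h v) = (\<Sum>e\<in>E. \<Sum>v\<in>V \<inter> e. h v)"
    using sum_degree_weighted[OF fin, where h = h] by simp
  also have "\<dots> = (\<Sum>e\<in>E. \<Sum>v\<in>e. h v)"
    using sub by (intro sum.cong) (auto simp: Int_absorb1)
  finally show ?thesis by simp
qed

lemma randic_ge_if_edge_bound:
  assumes "simple_graph V E"
    and "\<And>e. e \<in> E \<Longrightarrow> (\<Sum>v\<in>e. h v) \<le> 1 / sqrt (\<Prod>v\<in>e. real (degree E v))"
  shows "(\<Sum>v\<in>V. real (degree E v) * h v) \<le> randic E"
  unfolding randic_def sum_edges_eq_sum_vertices[OF assms(1), symmetric]
  using assms(2) by (rule sum_mono)

lemma randic_eq_if_edge_eq: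
  assumes "simple_graph V E"
    and "\<And>e. e \<in> E \<Longrightarrow> (\<Sum>v\<in>e. h v) = 1 / sqrt (\<Prod>v\<in>e. real (degree E v))"
  shows "randic E = (\<Sum>v\<in>V. real (degree E v) * h v)"
  unfolding randic_def sum_edges_eq_sum_vertices[OF assms(1), symmetric]
  using assms(2) by simp

text \<open>The weights make the edges of degree types (2,2) and (2,4) tight, and a vertex of degree
  \<open>d\<close> carries total weight \<open>d * chem_weight d\<close>, i.e. \<open>1/2\<close> or \<open>sqrt 2 - 1\<close>.\<close>
definition chem_weight :: "nat \<Rightarrow> real" where
  "chem_weight d = (if d = 4 then (sqrt 2 - 1) / 4 else 1 / 4)"

lemma chem_weight_add_eq:
  assumes "d1 \<in> {2, 4}" "d2 \<in> {2, 4}" "\<not> (d1 = 4 \<and> d2 = 4)"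
  shows "chem_weight d1 + chem_weight d2 = 1 / sqrt (real d1 * real d2)"
proof -
  have sqrt4: "sqrt 4 = 2" by (simp add: real_sqrt_eq_iff)
  have "sqrt 8 = 2 * sqrt 2" using real_sqrt_mult[of 4 2] sqrt4 by simp
  then have sqrt8: "1 / 4 + (sqrt 2 - 1) / 4 = 1 / sqrt 8" by (simp add: field_simps)
  consider "d1 = 2" "d2 = 2" | "d1 = 2" "d2 = 4" | "d1 = 4" "d2 = 2" using assms by auto
  then show ?thesis by cases (simp_all add: chem_weight_def sqrt4 sqrt8 add.commute)
qed

lemma chem_weight_add_le:
  assumes "d1 \<in> {2, 4}" "d2 \<in> {2, 4}"
  shows "chem_weight d1 + chem_weight d2 \<le> 1 / sqrt (real d1 * real d2)"
proof (cases "d1 = 4 \<and> d2 = 4")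
  case True
  have "sqrt 2 \<le> 3 / 2" by (rule real_le_lsqrt) (auto simp: power2_eq_square)
  moreover have "sqrt 16 = 4" by (simp add: real_sqrt_eq_iff)
  ultimately show ?thesis using True by (simp add: chem_weight_def)
qed (use assms chem_weight_add_eq in auto)

locale chemical_nontrivial_cactus = nontrivial_cactus_graph +
  assumes chemical: "chemical V E" and two_vertices: "card V \<ge> 2"
begin

lemma degree_2_or_4: "v \<in> V \<Longrightarrow> degree E v \<in> {2, 4}"
  using degree_eq_card_cycles[of v] degree_pos[OF two_vertices, of v] chemical
  unfolding chemical_def by fastforce

lemma card_cycles_eq: "card (cycles E) = card {v\<in>V. degree E v = 4} + 1"
proof -
  have "2 * card E = (\<Sum>v\<in>V. degree E v)"
    using sum_degree_eq_twice_card_edges[OF finite_V finite_E edges] by simp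
  also have "\<dots> = (\<Sum>v\<in>V. 2 + (if degree E v = 4 then 2 else 0))"
  proof (rule sum.cong[OF refl])
    fix v assume "v \<in> V"
    then show "degree E v = 2 + (if degree E v = 4 then 2 else 0)"
      using degree_2_or_4[of v] by auto
  qed
  also have "\<dots> = (\<Sum>v\<in>V. 2) + (\<Sum>v\<in>V. if degree E v = 4 then 2 else 0)"
    by (rule sum.distrib)
  also have "\<dots> = 2 * card V + 2 * card {v\<in>V. degree E v = 4}"
    using finite_V by (simp add: sum.If_cases Int_def)
  finally show ?thesis using card_V_add_card_cycles by linarith
qed

lemma edge_weight_le:
  assumes "e \<in> E"
  shows "(\<Sum>v\<in>e. chem_weight (degree E v)) \<le> 1 / sqrt (\<Prod>v\<in>e. real (degree E v))"
  using assms
proof (elim edgeE)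
  fix x y assume "e = {x, y}" "x \<noteq> y" "x \<in> V" "y \<in> V"
  then show ?thesis using chem_weight_add_le[OF degree_2_or_4 degree_2_or_4, of x y] by simp
qed

lemma edge_weight_eq:
  assumes "e \<in> E" "\<exists>v\<in>e. degree E v \<noteq> 4"
  shows "(\<Sum>v\<in>e. chem_weight (degree E v)) = 1 / sqrt (\<Prod>v\<in>e. real (degree E v))"
  using assms(1)
proof (elim edgeE)
  fix x y assume xy: "e = {x, y}" "x \<noteq> y" "x \<in> V" "y \<in> V"
  then have "\<not> (degree E x = 4 \<and> degree E y = 4)" using assms(2) by auto
  then show ?thesis
    using xy chem_weight_add_eq[OF degree_2_or_4 degree_2_or_4, of x y] by simp
qed

lemma sum_vertex_weights:
  "(\<Sum>v\<in>V. real (degree E v) * chem_weight (degree E v))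
    = real (card V) / 2 - (real (card (cycles E)) - 1) * (3 / 2 - sqrt 2)"
proof -
  have "(\<Sum>v\<in>V. real (degree E v) * chem_weight (degree E v))
      = (\<Sum>v\<in>V. 1 / 2 + (if degree E v = 4 then sqrt 2 - 3 / 2 else 0))"
    using degree_2_or_4 by (intro sum.cong) (auto simp: chem_weight_def)
  also have "\<dots> = real (card V) / 2 + real (card {v\<in>V. degree E v = 4}) * (sqrt 2 - 3 / 2)"
    using finite_V by (simp add: sum.distrib sum.If_cases Int_def)
  finally show ?thesis using card_cycles_eq by (simp add: algebra_simps)
qed

lemma randic_eq_if_no_adjacent_articulation_points:
  assumes no_adjacent: "\<forall>u\<in>V. \<forall>v\<in>V. adj E u v \<longrightarrow> \<not> (articulation_point V E u \<and> articulation_point V E v)"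
  shows "randic E = (\<Sum>v\<in>V. real (degree E v) * chem_weight (degree E v))"
proof -
  have "\<exists>v\<in>e. degree E v \<noteq> 4" if "e \<in> E" for e
  proof -
    obtain x y where xy: "e = {x, y}" "x \<noteq> y" "x \<in> V" "y \<in> V" using \<open>e \<in> E\<close> by (rule edgeE)
    then have "adj E x y" using \<open>e \<in> E\<close> by (simp add: adj_def)
    then show ?thesis using no_adjacent xy articulation_point_if_degree_ge_4 by fastforce
  qed
  then show ?thesis using edge_weight_eq by (intro randic_eq_if_edge_eq[OF simple]) blast
qed

end

theorem corollary4p5:
  fixes V :: "'a set" and E :: "'a set set" and n k :: nat
  assumes "simple_graph V E"
    and "chemical V E"
    and "nontrivial_cactus V E"
    and "card V = n" and "n \<ge> 2"
    and "card (cycles E) = k"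
  shows "randic E \<ge> real n / 2 - (real k - 1) * (3 / 2 - sqrt 2) \<and>
         ((\<forall>u\<in>V. \<forall>v\<in>V. adj E u v \<longrightarrow> \<not> (articulation_point V E u \<and> articulation_point V E v))
         \<longrightarrow> randic E = real n / 2 - (real k - 1) * (3 / 2 - sqrt 2))"
proof -
  interpret chemical_nontrivial_cactus V E
    using assms by unfold_locales auto
  have weights: "(\<Sum>v\<in>V. real (degree E v) * chem_weight (degree E v))
      = real n / 2 - (real k - 1) * (3 / 2 - sqrt 2)"
    using sum_vertex_weights assms(4,6) by simp
  have "randic E \<ge> real n / 2 - (real k - 1) * (3 / 2 - sqrt 2)"
    using randic_ge_if_edge_bound[OF simple edge_weight_le] weights by simp
  moreover have "randic E = real n / 2 - (real k - 1) * (3 / 2 - sqrt 2)"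
    if "\<forall>u\<in>V. \<forall>v\<in>V. adj E u v \<longrightarrow> \<not> (articulation_point V E u \<and> articulation_point V E v)"
    using randic_eq_if_no_adjacent_articulation_points[OF that] weights by simp
  ultimately show ?thesis by blast
qed

end
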